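(* Let $k \in \mathbb{Z}_{\geq 0}$ and let $\gamma_X$ be a $(2k+2)$-DMS. Then $\operatorname{supp} H_k(\mathcal{R}^{\mathrm{lev}}(\gamma_X))$ is a convex subset of $\mathbf{Dyn}$, i.e. whenever $p \leq q \leq r$ in $\mathbf{Dyn}$ with $p, r$ in the support, also $q$ is in the support.
   Context: A dynamic metric space (DMS) $\gamma_X = (X, d_X(\cdot))$ is a finite set $X$ with a function $d_X : \mathbb{R} \times X \times X \to \mathbb{R}_{\geq 0}$ such that for each $t$, $d_X(t)$ is a pseudometric on $X$, and for each $x,x'$ the map $t \mapsto d_X(t)(x,x')$ is continuous. A $(2k+2)$-DMS is a DMS with $|X| = 2k+2$. For a compact interval $I \subset \mathbb{R}$, $d_X(I)(x,x') := \inf_{t \in I} d_X(t)(x,x')$ (a semimetric). For a semimetric $d$ on $X$ and $\delta \geq 0$, the Rips complex $\mathcal{R}_\delta(d)$ is the abstract simplicial complex on $X$ whose simplices are the finite nonempty $\sigma \subseteq X$ with $d(x,y) \leq \delta$ for all $x,y \in \sigma$. $\mathbf{Dyn}$ is the poset of pairs $(I,\delta)$ with $I$ a compact interval of $\mathbb{R}$ and $\delta \geq 0$, with $(I,\delta) \leq (I',\delta')$ iff $I \subseteq I'$ and $\delta \leq \delta'$. $\mathcal{R}^{\mathrm{lev}}(\gamma_X) : \mathbf{Dyn} \to \mathbf{Simp}$ sends $(I,\delta)$ to $\mathcal{R}_\delta(d_X(I))$ with inclusion maps, and $H_k(\mathcal{R}^{\mathrm{lev}}(\gamma_X))$ is its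 degree-$k$ simplicial homology over a fixed field $\mathbb{F}$. For this module every pointwise dimension is $0$ or $1$, and its support is the set of $p \in \mathbf{Dyn}$ where the vector space is nonzero. *)

theory Defs
  imports "HOL-Analysis.Analysis"
begin

definition pseudometric_on :: "'a set \<Rightarrow> ('a \<Rightarrow> 'a \<Rightarrow> real) \<Rightarrow> bool" where
  "pseudometric_on X d \<longleftrightarrow>
     (\<forall>x\<in>X. d x x = 0) \<and>
     (\<forall>x\<in>X. \<forall>y\<in>X. d x y \<ge> 0 \<and> d x y = d y x) \<and>
     (\<forall>x\<in>X. \<forall>y\<in>X. \<forall>z\<in>X. d x z \<le> d x y + d y z)"

definition DMS :: "'a set \<Rightarrow> (real \<Rightarrow> 'a \<Rightarrow> 'a \<Rightarrow> real) \<Rightarrow> bool" where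
  "DMS X dX \<longleftrightarrow> finite X \<and>
     (\<forall>t. pseudometric_on X (dX t)) \<and>
     (\<forall>x\<in>X. \<forall>y\<in>X. continuous_on UNIV (\<lambda>t. dX t x y))"

definition dI :: "(real \<Rightarrow> 'a \<Rightarrow> 'a \<Rightarrow> real) \<Rightarrow> real \<Rightarrow> real \<Rightarrow> 'a \<Rightarrow> 'a \<Rightarrow> real" where
  "dI dX a b x y = (INF t\<in>{a..b}. dX t x y)"

definition rips :: "'a set \<Rightarrow> ('a \<Rightarrow> 'a \<Rightarrow> real) \<Rightarrow> real \<Rightarrow> 'a set set" where
  "rips X d \<delta> = {\<sigma>. \<sigma> \<subseteq> X \<and> \<sigma> \<noteq> {} \<and> finite \<sigma> \<and> (\<forall>x\<in>\<sigma>. \<forall>y\<in>\<sigma>. d x y \<le> \<delta>)}"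

text \<open>simplices with n vertices, i.e. of dimension n-1\<close>
definition simplices :: "'a set set \<Rightarrow> nat \<Rightarrow> 'a set set" where
  "simplices K n = {\<sigma>\<in>K. card \<sigma> = n}"

definition is_chain :: "'a set set \<Rightarrow> nat \<Rightarrow> ('a set \<Rightarrow> 'f::field) \<Rightarrow> bool" where
  "is_chain K n c \<longleftrightarrow> (\<forall>\<sigma>. \<sigma> \<notin> simplices K n \<longrightarrow> c \<sigma> = 0)"

text \<open>incidence number [sigma : tau] for the orientation given by the vertex order\<close>
definition incidence :: "'a::linorder set \<Rightarrow> 'a set \<Rightarrow> 'f::field" where
  "incidence \<sigma> \<tau> = (if \<tau> \<subseteq> \<sigma> \<and> finite \<sigma> \<and> card \<sigma> = Suc (card \<tau>)
      then (-1) ^ card {y\<in>\<sigma>. y < the_elem (\<sigma> - \<tau>)} else 0)"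

definition bdry :: "'a::linorder set set \<Rightarrow> nat \<Rightarrow> ('a set \<Rightarrow> 'f::field) \<Rightarrow> 'a set \<Rightarrow> 'f" where
  "bdry K n c \<tau> = (\<Sum>\<sigma>\<in>simplices K n. c \<sigma> * incidence \<sigma> \<tau>)"

definition homology_nonzero :: "'f::field itself \<Rightarrow> 'a::linorder set set \<Rightarrow> nat \<Rightarrow> bool" where
  "homology_nonzero _ K k \<longleftrightarrow>
     (\<exists>c :: 'a set \<Rightarrow> 'f. is_chain K (k+1) c
        \<and> (\<forall>\<tau>\<in>simplices K k. bdry K (k+1) c \<tau> = 0)
        \<and> \<not> (\<exists>b :: 'a set \<Rightarrow> 'f. is_chain K (k+2) b
              \<and> (\<forall>\<tau>\<in>simplices K (k+1). c \<tau> = bdry K (k+2) b \<tau>)))"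

text \<open>An element ((a,b),delta) stands for ([a,b], delta)\<close>
definition Dyn :: "((real \<times> real) \<times> real) set" where
  "Dyn = {((a,b),\<delta>). a \<le> b \<and> 0 \<le> \<delta>}"

definition dyn_le :: "((real \<times> real) \<times> real) \<Rightarrow> ((real \<times> real) \<times> real) \<Rightarrow> bool" where
  "dyn_le p q \<longleftrightarrow> (case p of ((a,b),\<delta>) \<Rightarrow> case q of ((a',b'),\<delta>') \<Rightarrow>
      {a..b} \<subseteq> {a'..b'} \<and> \<delta> \<le> \<delta>')"

definition rips_lev :: "'a set \<Rightarrow> (real \<Rightarrow> 'a \<Rightarrow> 'a \<Rightarrow> real) \<Rightarrow> ((real \<times> real) \<times> real) \<Rightarrow> 'a set set" where
  "rips_lev X dX p = (case p of ((a,b),\<delta>) \<Rightarrow> rips X (dI dX a b) \<delta>)"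

definition supp_Hk_lev :: "'f::field itself \<Rightarrow> 'a::linorder set \<Rightarrow> (real \<Rightarrow> 'a \<Rightarrow> 'a \<Rightarrow> real)
    \<Rightarrow> nat \<Rightarrow> ((real \<times> real) \<times> real) set" where
  "supp_Hk_lev F X dX k = {p\<in>Dyn. homology_nonzero F (rips_lev X dX p) k}"

end

theory Submission
  imports Defs
begin

(* A Rips complex is the clique complex of the graph of pairs at distance at most delta, and
   the graphs grow along p \<le> q \<le> r.  The clique complex of a graph on at most 2k+1 vertices
   has vanishing reduced H_k: split off a vertex v; if v is adjacent to everything the cycle
   is a cone, otherwise the link of v has at most 2k-1 vertices and a Mayer-Vietoris argument
   applies by induction.  Hence, for k \<ge> 1, a nonzero H_k on 2k+2 vertices forces every
   vertex to have exactly one non-neighbour: at least one, else the complex is a cone, and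
   at most one, else both the link and the deletion of v are acyclic.  So the graphs at p and
   r have the same non-neighbour matching, and the graph at q, squeezed in between, equals the
   graph at p.  For k = 0 the unreduced H_0 of two points never vanishes. *)

section \<open>Chains on the full simplex\<close>

definition insert_sign :: "'a::linorder \<Rightarrow> 'a set \<Rightarrow> 'f::field" where
  "insert_sign x \<tau> = (-1) ^ card {y\<in>\<tau>. y < x}"

(* At \<tau> = {} this is the augmentation, so the cycles below are reduced cycles. *)
definition boundary :: "'a::linorder set \<Rightarrow> ('a set \<Rightarrow> 'f::field) \<Rightarrow> 'a set \<Rightarrow> 'f" where
  "boundary X c \<tau> = (\<Sum>x\<in>X - \<tau>. c (insert x \<tau>) * insert_sign x \<tau>)"

definition cone_chain :: "'a::linorder \<Rightarrow> ('a set \<Rightarrow> 'f::field) \<Rightarrow> 'a set \<Rightarrow> 'f" where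
  "cone_chain v c \<rho> = (if v \<in> \<rho> then insert_sign v (\<rho> - {v}) * c (\<rho> - {v}) else 0)"

definition chain_avoiding :: "'a \<Rightarrow> ('a set \<Rightarrow> 'f::field) \<Rightarrow> 'a set \<Rightarrow> 'f" where
  "chain_avoiding v c \<sigma> = (if v \<in> \<sigma> then 0 else c \<sigma>)"

definition chain_link :: "'a::linorder \<Rightarrow> ('a set \<Rightarrow> 'f::field) \<Rightarrow> 'a set \<Rightarrow> 'f" where
  "chain_link v c \<tau> = (if v \<in> \<tau> then 0 else insert_sign v \<tau> * c (insert v \<tau>))"

lemma insert_sign_square: "insert_sign x \<tau> * insert_sign x \<tau> = (1::'f::field)"
  unfolding insert_sign_def power_add[symmetric] by simp

lemma insert_sign_nonzero: "insert_sign x \<tau> \<noteq> (0::'f::field)"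
  using insert_sign_square[of x \<tau>] by (metis mult_zero_left zero_neq_one)

lemma insert_sign_insert:
  assumes "finite \<tau>" "x \<notin> \<tau>"
  shows "insert_sign v (insert x \<tau>) = (if x < v then - insert_sign v \<tau> else (insert_sign v \<tau> :: 'f::field))"
proof (cases "x < v")
  case True
  then have "{y\<in>insert x \<tau>. y < v} = insert x {y\<in>\<tau>. y < v}" by auto
  then show ?thesis using True assms by (simp add: insert_sign_def)
next
  case False
  then have "{y\<in>insert x \<tau>. y < v} = {y\<in>\<tau>. y < v}" by auto
  then show ?thesis using False by (simp add: insert_sign_def)
qed

lemma boundary_add: "boundary X (\<lambda>\<sigma>. a \<sigma> + b \<sigma>) \<tau> = boundary X a \<tau> + boundary X b \<tau>"
  unfolding boundary_def by (simp add: distrib_right sum.distrib)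

lemma boundary_diff: "boundary X (\<lambda>\<sigma>. a \<sigma> - b \<sigma>) \<tau> = boundary X a \<tau> - boundary X b \<tau>"
  unfolding boundary_def by (simp add: left_diff_distrib sum_subtractf)

lemma boundary_eq_0_if_vanishing:
  assumes "\<And>\<sigma>. v \<in> \<sigma> \<Longrightarrow> c \<sigma> = 0" "v \<in> \<tau>"
  shows "boundary X c \<tau> = 0"
  unfolding boundary_def using assms by (intro sum.neutral) auto

lemma boundary_cone_chain_avoiding:
  assumes "finite X" "v \<in> X" "v \<notin> \<tau>"
  shows "boundary X (cone_chain v c) \<tau> = c \<tau>"
proof -
  have "boundary X (cone_chain v c) \<tau> = (\<Sum>x\<in>{v}. cone_chain v c (insert x \<tau>) * insert_sign x \<tau>)"
    unfolding boundary_def using assms by (intro sum.mono_neutral_right) (auto simp: cone_chain_def)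
  then show ?thesis
    using assms(3) by (simp add: cone_chain_def mult.commute mult.left_commute insert_sign_square)
qed

lemma boundary_cone_chain_insert:
  fixes c :: "'a::linorder set \<Rightarrow> 'f::field"
  assumes "finite X" "v \<in> X" "finite \<tau>" "v \<notin> \<tau>" and vanish: "\<And>\<sigma>. v \<in> \<sigma> \<Longrightarrow> c \<sigma> = 0"
  shows "boundary X (cone_chain v c) (insert v \<tau>) = - (insert_sign v \<tau> * boundary X c \<tau>)"
proof -
  have summand: "cone_chain v c (insert x (insert v \<tau>)) * insert_sign x (insert v \<tau>)
      = - (insert_sign v \<tau> * (c (insert x \<tau>) * insert_sign x \<tau>))" if "x \<in> X - insert v \<tau>" for x
  proof -
    from that have x: "x \<noteq> v" "x \<notin> \<tau>" by auto
    have "insert x (insert v \<tau>) - {v} = insert x \<tau>" using x assms(4) by auto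
    then have "cone_chain v c (insert x (insert v \<tau>)) * insert_sign x (insert v \<tau>)
        = (insert_sign v (insert x \<tau>) * insert_sign x (insert v \<tau>)) * c (insert x \<tau>)"
      by (simp add: cone_chain_def ac_simps)
    also have "insert_sign v (insert x \<tau>) * insert_sign x (insert v \<tau>)
        = - (insert_sign v \<tau> * insert_sign x \<tau> :: 'f)"
    proof -
      have "insert_sign v (insert x \<tau>) = (if x < v then - insert_sign v \<tau> else (insert_sign v \<tau> :: 'f))"
        "insert_sign x (insert v \<tau>) = (if v < x then - insert_sign x \<tau> else (insert_sign x \<tau> :: 'f))"
        using assms(3,4) x(2) by (simp_all add: insert_sign_insert)
      then show ?thesis using x(1) by (cases x v rule: linorder_cases) (simp_all add: less_not_sym)
    qed
    finally show ?thesis by (simp add: ac_simps)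
  qed
  have "boundary X (cone_chain v c) (insert v \<tau>)
      = (\<Sum>x\<in>X - insert v \<tau>. - (insert_sign v \<tau> * (c (insert x \<tau>) * insert_sign x \<tau>)))"
    unfolding boundary_def by (rule sum.cong[OF refl summand])
  also have "\<dots> = - (insert_sign v \<tau> * (\<Sum>x\<in>insert v (X - insert v \<tau>). c (insert x \<tau>) * insert_sign x \<tau>))"
    using assms(1) by (simp add: vanish sum_negf sum_distrib_left)
  also have "(\<Sum>x\<in>insert v (X - insert v \<tau>). c (insert x \<tau>) * insert_sign x \<tau>) = boundary X c \<tau>"
    unfolding boundary_def by (rule sum.cong) (use assms(2,4) in auto)
  finally show ?thesis .
qed

lemma chain_split: "chain_avoiding v z \<sigma> + cone_chain v (chain_link v z) \<sigma> = z \<sigma>"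
  by (cases "v \<in> \<sigma>")
    (simp_all add: chain_avoiding_def cone_chain_def chain_link_def insert_absorb
      mult.assoc[symmetric] insert_sign_square)

lemma boundary_split_avoiding:
  assumes "finite X" "v \<in> X" "v \<notin> \<tau>"
  shows "boundary X z \<tau> = boundary X (chain_avoiding v z) \<tau> + chain_link v z \<tau>"
proof -
  have "boundary X z \<tau> = boundary X (\<lambda>\<sigma>. chain_avoiding v z \<sigma> + cone_chain v (chain_link v z) \<sigma>) \<tau>"
    by (simp only: chain_split)
  then show ?thesis by (simp add: boundary_add boundary_cone_chain_avoiding assms)
qed

lemma boundary_split_insert:
  assumes "finite X" "v \<in> X" "finite \<tau>" "v \<notin> \<tau>"
  shows "boundary X z (insert v \<tau>) = - (insert_sign v \<tau> * boundary X (chain_link v z) \<tau>)"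
proof -
  have "boundary X z (insert v \<tau>)
      = boundary X (\<lambda>\<sigma>. chain_avoiding v z \<sigma> + cone_chain v (chain_link v z) \<sigma>) (insert v \<tau>)"
    by (simp only: chain_split)
  also have "\<dots> = boundary X (cone_chain v (chain_link v z)) (insert v \<tau>)"
    by (simp add: boundary_add boundary_eq_0_if_vanishing[of v] chain_avoiding_def)
  also have "\<dots> = - (insert_sign v \<tau> * boundary X (chain_link v z) \<tau>)"
    by (rule boundary_cone_chain_insert) (use assms in \<open>auto simp: chain_link_def\<close>)
  finally show ?thesis .
qed

definition clique :: "('a \<Rightarrow> 'a \<Rightarrow> bool) \<Rightarrow> 'a set \<Rightarrow> 'a set \<Rightarrow> bool" where
  "clique G S \<sigma> \<longleftrightarrow> \<sigma> \<subseteq> S \<and> (\<forall>x\<in>\<sigma>. \<forall>y\<in>\<sigma>. x \<noteq> y \<longrightarrow> G x y)"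

definition neighbours :: "('a \<Rightarrow> 'a \<Rightarrow> bool) \<Rightarrow> 'a set \<Rightarrow> 'a \<Rightarrow> 'a set" where
  "neighbours G S v = {u\<in>S. u \<noteq> v \<and> G u v \<and> G v u}"

definition clique_chain :: "('a \<Rightarrow> 'a \<Rightarrow> bool) \<Rightarrow> 'a set \<Rightarrow> nat \<Rightarrow> ('a set \<Rightarrow> 'f::field) \<Rightarrow> bool" where
  "clique_chain G S n c \<longleftrightarrow> (\<forall>\<sigma>. c \<sigma> \<noteq> 0 \<longrightarrow> clique G S \<sigma> \<and> card \<sigma> = n)"

definition is_cycle :: "'a::linorder set \<Rightarrow> nat \<Rightarrow> ('a set \<Rightarrow> 'f::field) \<Rightarrow> bool" where
  "is_cycle X n z \<longleftrightarrow> (\<forall>\<tau>. \<tau> \<subseteq> X \<longrightarrow> card \<tau> = n \<longrightarrow> boundary X z \<tau> = 0)"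

definition is_clique_boundary ::
    "('a \<Rightarrow> 'a \<Rightarrow> bool) \<Rightarrow> 'a::linorder set \<Rightarrow> 'a set \<Rightarrow> nat \<Rightarrow> ('a set \<Rightarrow> 'f::field) \<Rightarrow> bool" where
  "is_clique_boundary G X S n z \<longleftrightarrow>
     (\<exists>b. clique_chain G S (n + 1) b \<and> (\<forall>\<sigma>. \<sigma> \<subseteq> X \<longrightarrow> card \<sigma> = n \<longrightarrow> z \<sigma> = boundary X b \<sigma>))"

lemma neighbours_subset: "neighbours G S v \<subseteq> S - {v}"
  by (auto simp: neighbours_def)

lemma neighbours_mono:
  assumes "v \<in> S" "\<And>x y. x \<in> S \<Longrightarrow> y \<in> S \<Longrightarrow> G x y \<Longrightarrow> G' x y"
  shows "neighbours G S v \<subseteq> neighbours G' S v"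
  using assms by (auto simp: neighbours_def)

lemma card_neighbours_partition:
  assumes "finite S" "v \<in> S"
  shows "card (neighbours G S v) + card (S - insert v (neighbours G S v)) + 1 = card S"
proof -
  have sub: "insert v (neighbours G S v) \<subseteq> S" using assms(2) neighbours_subset[of G S v] by blast
  then have "finite (neighbours G S v)" using assms(1) by (meson finite_insert finite_subset)
  moreover have "v \<notin> neighbours G S v" by (simp add: neighbours_def)
  ultimately have "card (insert v (neighbours G S v)) = card (neighbours G S v) + 1" by simp
  moreover have "card (insert v (neighbours G S v)) \<le> card S" using card_mono[OF assms(1) sub] .
  ultimately show ?thesis using card_Diff_subset[OF finite_subset[OF sub assms(1)] sub] by linarith
qed

lemma clique_chain_mono: "clique_chain G T n c \<Longrightarrow> T \<subseteq> S \<Longrightarrow> clique_chain G S n c"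
  unfolding clique_chain_def clique_def by (meson subset_trans)

lemma clique_chain_add:
  assumes "clique_chain G S n a" "clique_chain G S n b"
  shows "clique_chain G S n (\<lambda>\<sigma>. a \<sigma> + b \<sigma>)"
  unfolding clique_chain_def
proof (intro allI impI)
  fix \<sigma> assume "a \<sigma> + b \<sigma> \<noteq> 0"
  then have "a \<sigma> \<noteq> 0 \<or> b \<sigma> \<noteq> 0" by auto
  then show "clique G S \<sigma> \<and> card \<sigma> = n" using assms unfolding clique_chain_def by blast
qed

lemma clique_chain_diff:
  assumes "clique_chain G S n a" "clique_chain G S n b"
  shows "clique_chain G S n (\<lambda>\<sigma>. a \<sigma> - b \<sigma>)"
  unfolding clique_chain_def
proof (intro allI impI)
  fix \<sigma> assume "a \<sigma> - b \<sigma> \<noteq> 0"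
  then have "a \<sigma> \<noteq> 0 \<or> b \<sigma> \<noteq> 0" by auto
  then show "clique G S \<sigma> \<and> card \<sigma> = n" using assms unfolding clique_chain_def by blast
qed

lemma clique_chain_empty:
  assumes "clique_chain G {} (Suc n) z"
  shows "z = (\<lambda>_. 0)"
proof
  fix \<sigma> show "z \<sigma> = 0" using assms unfolding clique_chain_def clique_def by auto
qed

lemma clique_chain_vanishing: "clique_chain G T n c \<Longrightarrow> v \<notin> T \<Longrightarrow> v \<in> \<sigma> \<Longrightarrow> c \<sigma> = 0"
  unfolding clique_chain_def clique_def by blast

lemma clique_chain_avoiding: "clique_chain G S n z \<Longrightarrow> clique_chain G (S - {v}) n (chain_avoiding v z)"
  unfolding clique_chain_def clique_def chain_avoiding_def by auto

lemma clique_chain_link: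
  assumes "clique_chain G S (Suc n) z"
  shows "clique_chain G (neighbours G S v) n (chain_link v z)"
  unfolding clique_chain_def
proof (intro allI impI)
  fix \<tau> assume "chain_link v z \<tau> \<noteq> 0"
  then have v: "v \<notin> \<tau>" and "z (insert v \<tau>) \<noteq> 0" by (auto simp: chain_link_def split: if_splits)
  with assms have cl: "clique G S (insert v \<tau>)" and card: "card (insert v \<tau>) = Suc n"
    unfolding clique_chain_def by auto
  from card have "finite (insert v \<tau>)" by (intro card_ge_0_finite) simp
  then have "finite \<tau>" by simp
  with card v have "card \<tau> = n" by simp
  moreover have "clique G (neighbours G S v) \<tau>"
    using cl v unfolding clique_def neighbours_def by auto
  ultimately show "clique G (neighbours G S v) \<tau> \<and> card \<tau> = n" by simp
qed

lemma clique_chain_cone: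
  assumes "clique_chain G (neighbours G S v) n c" "finite S" "v \<in> S"
  shows "clique_chain G S (Suc n) (cone_chain v c)"
  unfolding clique_chain_def
proof (intro allI impI)
  fix \<rho> assume "cone_chain v c \<rho> \<noteq> 0"
  then have v: "v \<in> \<rho>" and "c (\<rho> - {v}) \<noteq> 0" by (auto simp: cone_chain_def split: if_splits)
  with assms(1) have "clique G (neighbours G S v) (\<rho> - {v})" and card: "card (\<rho> - {v}) = n"
    unfolding clique_chain_def by auto
  then have link: "\<rho> - {v} \<subseteq> neighbours G S v"
    and pairs: "\<And>x y. x \<in> \<rho> - {v} \<Longrightarrow> y \<in> \<rho> - {v} \<Longrightarrow> x \<noteq> y \<Longrightarrow> G x y"
    unfolding clique_def by blast+
  have "\<rho> \<subseteq> S" using link neighbours_subset[of G S v] assms(3) by auto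
  moreover have "G x y" if "x \<in> \<rho>" "y \<in> \<rho>" "x \<noteq> y" for x y
    using that link pairs[of x y] by (cases "x = v"; cases "y = v") (auto simp: neighbours_def)
  ultimately have "clique G S \<rho>" by (simp add: clique_def)
  moreover have "card \<rho> = Suc n"
    using card_Suc_Diff1[OF finite_subset[OF \<open>\<rho> \<subseteq> S\<close> assms(2)] v] card by simp
  ultimately show "clique G S \<rho> \<and> card \<rho> = Suc n" by simp
qed

lemma is_cycle_chain_link:
  assumes "finite X" "v \<in> X" "is_cycle X (Suc m) z"
  shows "is_cycle X m (chain_link v z)"
  unfolding is_cycle_def
proof (intro allI impI)
  fix \<tau> assume \<tau>: "\<tau> \<subseteq> X" "card \<tau> = m"
  show "boundary X (chain_link v z) \<tau> = 0"
  proof (cases "v \<in> \<tau>")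
    case True
    then show ?thesis by (intro boundary_eq_0_if_vanishing[of v]) (auto simp: chain_link_def)
  next
    case False
    have "finite \<tau>" using \<tau>(1) assms(1) by (rule finite_subset)
    then have "boundary X z (insert v \<tau>) = - (insert_sign v \<tau> * boundary X (chain_link v z) \<tau>)"
      using boundary_split_insert assms(1,2) False by blast
    moreover have "boundary X z (insert v \<tau>) = 0"
      using assms(2,3) \<tau> False \<open>finite \<tau>\<close> by (simp add: is_cycle_def)
    ultimately show ?thesis by (simp add: insert_sign_nonzero)
  qed
qed

lemma is_cycle_avoiding_add:
  assumes "finite X" "v \<in> X" "is_cycle X n z"
    and u_vanishing: "\<And>\<sigma>. v \<in> \<sigma> \<Longrightarrow> u \<sigma> = 0"
    and du: "\<And>\<tau>. \<tau> \<subseteq> X \<Longrightarrow> card \<tau> = n \<Longrightarrow> chain_link v z \<tau> = boundary X u \<tau>"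
  shows "is_cycle X n (\<lambda>\<sigma>. chain_avoiding v z \<sigma> + u \<sigma>)"
  unfolding is_cycle_def boundary_add
proof (intro allI impI)
  fix \<tau> assume \<tau>: "\<tau> \<subseteq> X" "card \<tau> = n"
  show "boundary X (chain_avoiding v z) \<tau> + boundary X u \<tau> = 0"
  proof (cases "v \<in> \<tau>")
    case True
    have "boundary X (chain_avoiding v z) \<tau> = 0"
      by (rule boundary_eq_0_if_vanishing[of v]) (use True in \<open>auto simp: chain_avoiding_def\<close>)
    moreover have "boundary X u \<tau> = 0"
      by (rule boundary_eq_0_if_vanishing[of v]) (use True u_vanishing in auto)
    ultimately show ?thesis by simp
  next
    case False
    then have "boundary X z \<tau> = boundary X (chain_avoiding v z) \<tau> + boundary X u \<tau>"
      using boundary_split_avoiding[OF assms(1,2) False, of z] du[OF \<tau>] by simp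
    then show ?thesis using assms(3) \<tau> by (simp add: is_cycle_def)
  qed
qed

lemma is_cycle_if_boundary_vanishes_on_cliques:
  assumes "clique_chain G X (Suc n) c" "\<And>\<tau>. clique G X \<tau> \<Longrightarrow> card \<tau> = n \<Longrightarrow> boundary X c \<tau> = 0"
  shows "is_cycle X n c"
  unfolding is_cycle_def
proof (intro allI impI)
  fix \<tau> assume \<tau>: "\<tau> \<subseteq> X" "card \<tau> = n"
  show "boundary X c \<tau> = 0"
  proof (cases "clique G X \<tau>")
    case True
    then show ?thesis using assms(2) \<tau>(2) by blast
  next
    case False
    then have "c (insert x \<tau>) = 0" for x
      using assms(1) unfolding clique_chain_def clique_def by blast
    then show ?thesis by (simp add: boundary_def)
  qed
qed

lemma eq_boundary_sub_cone_chain: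
  assumes X: "finite X" "v \<in> X"
    and u_vanishing: "\<And>\<sigma>. v \<in> \<sigma> \<Longrightarrow> u \<sigma> = 0"
    and du: "\<And>\<tau>. \<tau> \<subseteq> X \<Longrightarrow> card \<tau> = n \<Longrightarrow> chain_link v z \<tau> = boundary X u \<tau>"
    and db: "\<And>\<sigma>. \<sigma> \<subseteq> X \<Longrightarrow> card \<sigma> = Suc n \<Longrightarrow> chain_avoiding v z \<sigma> + u \<sigma> = boundary X b \<sigma>"
    and \<sigma>: "\<sigma> \<subseteq> X" "card \<sigma> = Suc n"
  shows "z \<sigma> = boundary X (\<lambda>\<sigma>. b \<sigma> - cone_chain v u \<sigma>) \<sigma>"
proof (cases "v \<in> \<sigma>")
  case False
  then show ?thesis
    using db[OF \<sigma>] boundary_cone_chain_avoiding[OF X False, of u]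
    by (simp add: boundary_diff chain_avoiding_def eq_diff_eq)
next
  case True
  then obtain \<tau> where \<sigma>_eq: "\<sigma> = insert v \<tau>" and v: "v \<notin> \<tau>" by (metis mk_disjoint_insert)
  have \<tau>: "\<tau> \<subseteq> X" "finite \<tau>" "card \<tau> = n"
    using \<sigma> \<sigma>_eq v finite_subset[OF \<sigma>(1) X(1)] by auto
  have "boundary X u \<tau> = insert_sign v \<tau> * z \<sigma>"
    using du[OF \<tau>(1,3)] v \<sigma>_eq by (simp add: chain_link_def)
  moreover have "boundary X (cone_chain v u) \<sigma> = - (insert_sign v \<tau> * boundary X u \<tau>)"
    unfolding \<sigma>_eq using boundary_cone_chain_insert[OF X \<tau>(2) v u_vanishing] .
  moreover have "boundary X b \<sigma> = 0"
    using db[OF \<sigma>] True u_vanishing[OF True] by (simp add: chain_avoiding_def)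
  ultimately show ?thesis by (simp add: boundary_diff mult.assoc[symmetric] insert_sign_square)
qed

lemma is_clique_boundary_zero: "is_clique_boundary G X S n (\<lambda>_. 0)"
  unfolding is_clique_boundary_def
  by (rule exI[of _ "\<lambda>_. 0"]) (simp add: clique_chain_def boundary_def)

section \<open>Acyclicity of small clique complexes\<close>

lemma cone_cycle_is_clique_boundary:
  fixes z :: "'a::linorder set \<Rightarrow> 'f::field"
  assumes X: "finite X" "S \<subseteq> X" "v \<in> S" and cone: "neighbours G S v = S - {v}"
    and z: "clique_chain G S (Suc n) z" "is_cycle X n z"
  shows "is_clique_boundary G X S (Suc n) z"
  unfolding is_clique_boundary_def
proof (intro exI conjI allI impI)
  have "finite S" using X(2,1) by (rule finite_subset)
  then show "clique_chain G S (Suc n + 1) (cone_chain v (chain_avoiding v z))"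
    using clique_chain_cone[of G S v "Suc n" "chain_avoiding v z"] clique_chain_avoiding[OF z(1), of v] cone X(3)
    by simp
  have vX: "v \<in> X" using X(2,3) ..
  fix \<sigma> assume \<sigma>: "\<sigma> \<subseteq> X" "card \<sigma> = Suc n"
  show "z \<sigma> = boundary X (cone_chain v (chain_avoiding v z)) \<sigma>"
  proof (cases "v \<in> \<sigma>")
    case False
    then show ?thesis
      using boundary_cone_chain_avoiding[OF X(1) vX False, of "chain_avoiding v z"]
      by (simp add: chain_avoiding_def)
  next
    case True
    then obtain \<tau> where \<sigma>_eq: "\<sigma> = insert v \<tau>" and v: "v \<notin> \<tau>" by (metis mk_disjoint_insert)
    have \<tau>: "\<tau> \<subseteq> X" "finite \<tau>" "card \<tau> = n"
      using \<sigma> \<sigma>_eq v finite_subset[OF \<sigma>(1) X(1)] by auto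
    have "0 = boundary X z \<tau>" using z(2) \<tau> by (simp add: is_cycle_def)
    also have "\<dots> = boundary X (chain_avoiding v z) \<tau> + insert_sign v \<tau> * z \<sigma>"
      using boundary_split_avoiding[OF X(1) vX v, of z] v \<sigma>_eq by (simp add: chain_link_def)
    finally have "boundary X (chain_avoiding v z) \<tau> = - (insert_sign v \<tau> * z \<sigma>)"
      by (simp add: eq_neg_iff_add_eq_0)
    moreover have "boundary X (cone_chain v (chain_avoiding v z)) \<sigma>
        = - (insert_sign v \<tau> * boundary X (chain_avoiding v z) \<tau>)"
      unfolding \<sigma>_eq by (rule boundary_cone_chain_insert[OF X(1) vX \<tau>(2) v]) (simp add: chain_avoiding_def)
    ultimately show ?thesis by (simp add: mult.assoc[symmetric] insert_sign_square)
  qed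
qed

(* Mayer-Vietoris step: write the link of z as \<partial>u inside the link of v; with the cone
   v * u = cone_chain v u, the cycle z + \<partial>(v * u) avoids v, so it is some \<partial>b inside S - {v},
   and z = \<partial>(b - v * u). *)
lemma clique_boundary_from_link_and_deletion:
  fixes z :: "'a::linorder set \<Rightarrow> 'f::field"
  assumes X: "finite X" "S \<subseteq> X" "v \<in> S"
    and z: "clique_chain G S (Suc (Suc m)) z" "is_cycle X (Suc m) z"
    and link_acyclic: "\<And>w::'a set \<Rightarrow> 'f. clique_chain G (neighbours G S v) (Suc m) w \<Longrightarrow> is_cycle X m w
        \<Longrightarrow> is_clique_boundary G X (neighbours G S v) (Suc m) w"
    and deletion_acyclic: "\<And>z'::'a set \<Rightarrow> 'f. clique_chain G (S - {v}) (Suc (Suc m)) z'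
        \<Longrightarrow> is_cycle X (Suc m) z' \<Longrightarrow> is_clique_boundary G X (S - {v}) (Suc (Suc m)) z'"
  shows "is_clique_boundary G X S (Suc (Suc m)) z"
proof -
  have vX: "v \<in> X" using X(2,3) ..
  have finS: "finite S" using X(2,1) by (rule finite_subset)
  obtain u where u: "clique_chain G (neighbours G S v) (Suc (Suc m)) u"
      and du: "\<And>\<tau>. \<tau> \<subseteq> X \<Longrightarrow> card \<tau> = Suc m \<Longrightarrow> chain_link v z \<tau> = boundary X u \<tau>"
    using link_acyclic[OF clique_chain_link[OF z(1)] is_cycle_chain_link[OF X(1) vX z(2)]]
    unfolding is_clique_boundary_def by auto
  have u_vanishing: "u \<sigma> = 0" if "v \<in> \<sigma>" for \<sigma>
    using clique_chain_vanishing[OF u _ that] by (simp add: neighbours_def)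
  let ?z' = "\<lambda>\<sigma>. chain_avoiding v z \<sigma> + u \<sigma>"
  have "clique_chain G (S - {v}) (Suc (Suc m)) ?z'"
    using clique_chain_add[OF clique_chain_avoiding[OF z(1)] clique_chain_mono[OF u neighbours_subset]] .
  moreover have "is_cycle X (Suc m) ?z'"
    using is_cycle_avoiding_add[OF X(1) vX z(2) u_vanishing du] .
  ultimately have "is_clique_boundary G X (S - {v}) (Suc (Suc m)) ?z'" by (rule deletion_acyclic)
  then obtain b where b: "clique_chain G (S - {v}) (Suc (Suc (Suc m))) b"
      and db: "\<And>\<sigma>. \<sigma> \<subseteq> X \<Longrightarrow> card \<sigma> = Suc (Suc m)
        \<Longrightarrow> chain_avoiding v z \<sigma> + u \<sigma> = boundary X b \<sigma>"
    unfolding is_clique_boundary_def by auto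
  show ?thesis
    unfolding is_clique_boundary_def
  proof (intro exI conjI allI impI)
    show "clique_chain G S (Suc (Suc m) + 1) (\<lambda>\<sigma>. b \<sigma> - cone_chain v u \<sigma>)"
      using clique_chain_diff[OF clique_chain_mono[OF b] clique_chain_cone[OF u finS X(3)]] by auto
    fix \<sigma> assume "\<sigma> \<subseteq> X" "card \<sigma> = Suc (Suc m)"
    then show "z \<sigma> = boundary X (\<lambda>\<sigma>. b \<sigma> - cone_chain v u \<sigma>) \<sigma>"
      using eq_boundary_sub_cone_chain[OF X(1) vX u_vanishing du db] by blast
  qed
qed

lemma small_clique_cycle_is_boundary:
  fixes z :: "'a::linorder set \<Rightarrow> 'f::field"
  assumes "finite X" "S \<subseteq> X" "card S \<le> 2 * k + 1" "clique_chain G S (Suc k) z" "is_cycle X k z"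
  shows "is_clique_boundary G X S (Suc k) z"
  using assms
proof (induction "k + card S" arbitrary: k S z rule: less_induct)
  case less
  have finS: "finite S" using less.prems(2,1) by (rule finite_subset)
  show ?case
  proof (cases "S = {}")
    case True
    with less.prems(4) have "z = (\<lambda>_. 0)" by (simp add: clique_chain_empty)
    then show ?thesis by (simp add: is_clique_boundary_zero)
  next
    case False
    then obtain v where v: "v \<in> S" by blast
    show ?thesis
    proof (cases "neighbours G S v = S - {v}")
      case True
      then show ?thesis by (rule cone_cycle_is_clique_boundary[OF less.prems(1,2) v _ less.prems(4,5)])
    next
      case False
      then obtain a where "a \<in> S - insert v (neighbours G S v)"
        using neighbours_subset[of G S v] by blast
      then have "card (S - insert v (neighbours G S v)) \<noteq> 0" using finS by auto
      then have card_link: "card (neighbours G S v) + 2 \<le> card S"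
        using card_neighbours_partition[OF finS v, of G] by linarith
      then obtain m where k: "k = Suc m" using less.prems(3) by (cases k) auto
      have z: "clique_chain G S (Suc (Suc m)) z" "is_cycle X (Suc m) z" using less.prems(4,5) k by simp_all
      show ?thesis
        unfolding k
      proof (rule clique_boundary_from_link_and_deletion[OF less.prems(1,2) v z])
        fix w :: "'a set \<Rightarrow> 'f"
        assume w: "clique_chain G (neighbours G S v) (Suc m) w" "is_cycle X m w"
        have "neighbours G S v \<subseteq> X" using less.prems(2) neighbours_subset[of G S v] by blast
        moreover have "m + card (neighbours G S v) < k + card S" using card_link k by linarith
        moreover have "card (neighbours G S v) \<le> 2 * m + 1" using card_link less.prems(3) k by linarith
        ultimately show "is_clique_boundary G X (neighbours G S v) (Suc m) w"
          using less.hyps less.prems(1) w by blast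
      next
        fix z' :: "'a set \<Rightarrow> 'f"
        assume z': "clique_chain G (S - {v}) (Suc (Suc m)) z'" "is_cycle X (Suc m) z'"
        have "S - {v} \<subseteq> X" using less.prems(2) by blast
        moreover have "k + card (S - {v}) < k + card S" using card_Diff1_less[OF finS v] by linarith
        moreover have "card (S - {v}) \<le> 2 * Suc m + 1" using less.prems(3) k finS v by simp
        ultimately show "is_clique_boundary G X (S - {v}) (Suc (Suc m)) z'"
          using less.hyps[of "Suc m" "S - {v}"] less.prems(1) z' k by blast
      qed
    qed
  qed
qed

lemma non_neighbour_exists:
  fixes z :: "'a::linorder set \<Rightarrow> 'f::field"
  assumes "finite X" "v \<in> X" "clique_chain G X (Suc n) z" "is_cycle X n z"
    "\<not> is_clique_boundary G X X (Suc n) z"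
  shows "\<exists>u. u \<in> X - insert v (neighbours G X v)"
proof (rule ccontr)
  assume "\<not> ?thesis"
  then have "neighbours G X v = X - {v}" using neighbours_subset[of G X v] by blast
  with assms show False using cone_cycle_is_clique_boundary[OF assms(1) subset_refl assms(2)] by blast
qed

lemma non_neighbour_unique:
  fixes z :: "'a::linorder set \<Rightarrow> 'f::field"
  assumes X: "finite X" "card X = 2 * Suc m + 2" and v: "v \<in> X"
    and z: "clique_chain G X (Suc (Suc m)) z" "is_cycle X (Suc m) z"
      "\<not> is_clique_boundary G X X (Suc (Suc m)) z"
    and a: "a \<in> X - insert v (neighbours G X v)" and b: "b \<in> X - insert v (neighbours G X v)"
  shows "a = b"
proof (rule ccontr)
  assume "a \<noteq> b"
  then have "card {a, b} \<le> card (X - insert v (neighbours G X v))"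
    using a b X(1) by (intro card_mono) auto
  then have card_link: "card (neighbours G X v) \<le> 2 * m + 1"
    using card_neighbours_partition[OF X(1) v, of G] X(2) \<open>a \<noteq> b\<close> by simp
  have "is_clique_boundary G X X (Suc (Suc m)) z"
  proof (rule clique_boundary_from_link_and_deletion[OF X(1) subset_refl v z(1,2)])
    fix w :: "'a set \<Rightarrow> 'f"
    assume "clique_chain G (neighbours G X v) (Suc m) w" "is_cycle X m w"
    moreover have "neighbours G X v \<subseteq> X" using neighbours_subset[of G X v] by blast
    ultimately show "is_clique_boundary G X (neighbours G X v) (Suc m) w"
      using small_clique_cycle_is_boundary[OF X(1) _ card_link] by blast
  next
    fix z' :: "'a set \<Rightarrow> 'f"
    assume "clique_chain G (X - {v}) (Suc (Suc m)) z'" "is_cycle X (Suc m) z'"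
    moreover have "card (X - {v}) \<le> 2 * Suc m + 1" using X v by simp
    ultimately show "is_clique_boundary G X (X - {v}) (Suc (Suc m)) z'"
      using small_clique_cycle_is_boundary[OF X(1) Diff_subset] by blast
  qed
  with z(3) show False ..
qed

section \<open>Homology of clique complexes\<close>

definition clique_complex :: "('a \<Rightarrow> 'a \<Rightarrow> bool) \<Rightarrow> 'a set \<Rightarrow> 'a set set" where
  "clique_complex G X = {\<sigma>. \<sigma> \<noteq> {} \<and> clique G X \<sigma>}"

lemma clique_complex_subset_Pow: "clique_complex G X \<subseteq> Pow X"
  by (auto simp: clique_complex_def clique_def)

lemma simplices_clique_complex:
  "n \<noteq> 0 \<Longrightarrow> simplices (clique_complex G X) n = {\<sigma>. clique G X \<sigma> \<and> card \<sigma> = n}"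
  by (auto simp: simplices_def clique_complex_def)

lemma is_chain_clique_complex_iff:
  "n \<noteq> 0 \<Longrightarrow> is_chain (clique_complex G X) n c \<longleftrightarrow> clique_chain G X n c"
  by (auto simp: is_chain_def clique_chain_def simplices_clique_complex)

lemma clique_complex_cong:
  assumes "\<And>x. x \<in> X \<Longrightarrow> neighbours G X x = neighbours G' X x"
  shows "clique_complex G X = clique_complex G' X"
proof -
  have "clique G X \<sigma> \<longleftrightarrow> clique G' X \<sigma>" for \<sigma>
  proof -
    have "clique H X \<sigma> \<longleftrightarrow> \<sigma> \<subseteq> X \<and> (\<forall>x\<in>\<sigma>. \<forall>y\<in>\<sigma>. x \<noteq> y \<longrightarrow> y \<in> neighbours H X x)" for H
      by (auto simp: clique_def neighbours_def)
    then show ?thesis using assms by blast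
  qed
  then show ?thesis by (simp add: clique_complex_def)
qed

lemma incidence_insert:
  assumes "finite \<tau>" "x \<notin> \<tau>"
  shows "incidence (insert x \<tau>) \<tau> = insert_sign x \<tau>"
proof -
  have "insert x \<tau> - \<tau> = {x}" "{y \<in> insert x \<tau>. y < x} = {y \<in> \<tau>. y < x}" using assms(2) by auto
  then show ?thesis using assms by (simp add: incidence_def insert_sign_def subset_insertI)
qed

lemma incidence_nonzero_imp_insert:
  assumes "incidence \<sigma> \<tau> \<noteq> 0"
  obtains x where "x \<notin> \<tau>" "\<sigma> = insert x \<tau>"
proof -
  from assms have "\<tau> \<subseteq> \<sigma>" "finite \<sigma>" "card \<sigma> = Suc (card \<tau>)"
    unfolding incidence_def by (auto split: if_splits)
  then have "card (\<sigma> - \<tau>) = 1" by (simp add: card_Diff_subset finite_subset)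
  then obtain x where "\<sigma> - \<tau> = {x}" by (rule card_1_singletonE)
  with \<open>\<tau> \<subseteq> \<sigma>\<close> show ?thesis using that by blast
qed

lemma bdry_eq_boundary:
  fixes c :: "'a::linorder set \<Rightarrow> 'f::field"
  assumes X: "finite X" "K \<subseteq> Pow X" and c: "is_chain K n c" and \<tau>: "\<tau> \<subseteq> X"
  shows "bdry K n c \<tau> = boundary X c \<tau>"
proof -
  have "bdry K n c \<tau> = (\<Sum>\<sigma>\<in>Pow X. c \<sigma> * incidence \<sigma> \<tau>)"
    unfolding bdry_def using X c by (intro sum.mono_neutral_left) (auto simp: simplices_def is_chain_def)
  also have "\<dots> = (\<Sum>\<sigma>\<in>(\<lambda>x. insert x \<tau>) ` (X - \<tau>). c \<sigma> * incidence \<sigma> \<tau>)"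
  proof (rule sum.mono_neutral_right)
    show "\<forall>\<sigma>\<in>Pow X - (\<lambda>x. insert x \<tau>) ` (X - \<tau>). c \<sigma> * incidence \<sigma> \<tau> = 0"
      by (auto elim!: incidence_nonzero_imp_insert)
  qed (use X \<tau> in auto)
  also have "\<dots> = boundary X c \<tau>"
    unfolding boundary_def using finite_subset[OF \<tau> X(1)]
    by (subst sum.reindex) (auto simp: inj_on_def incidence_insert)
  finally show ?thesis .
qed

lemma homology_nonzero_clique_complexE:
  fixes X :: "'a::linorder set"
  assumes X: "finite X" and H: "homology_nonzero TYPE('f::field) (clique_complex G X) (Suc m)"
  obtains z :: "'a set \<Rightarrow> 'f::field" where "clique_chain G X (Suc (Suc m)) z" "is_cycle X (Suc m) z"
    "\<not> is_clique_boundary G X X (Suc (Suc m)) z"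
proof -
  let ?K = "clique_complex G X"
  note bdry = bdry_eq_boundary[OF X clique_complex_subset_Pow]
  obtain c :: "'a set \<Rightarrow> 'f" where c: "is_chain ?K (Suc (Suc m)) c"
    and dc: "\<forall>\<tau>\<in>simplices ?K (Suc m). bdry ?K (Suc (Suc m)) c \<tau> = 0"
    and not_bdry: "\<not> (\<exists>b :: 'a set \<Rightarrow> 'f. is_chain ?K (Suc (Suc (Suc m))) b
        \<and> (\<forall>\<tau>\<in>simplices ?K (Suc (Suc m)). c \<tau> = bdry ?K (Suc (Suc (Suc m))) b \<tau>))"
    using H unfolding homology_nonzero_def by auto
  have chain: "clique_chain G X (Suc (Suc m)) c" using c by (simp add: is_chain_clique_complex_iff)
  moreover have "is_cycle X (Suc m) c"
  proof (rule is_cycle_if_boundary_vanishes_on_cliques[OF chain])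
    fix \<tau> assume "clique G X \<tau>" "card \<tau> = Suc m"
    then show "boundary X c \<tau> = 0"
      using dc bdry[OF c] by (simp add: simplices_clique_complex clique_def)
  qed
  moreover have "\<not> is_clique_boundary G X X (Suc (Suc m)) c"
  proof
    assume "is_clique_boundary G X X (Suc (Suc m)) c"
    then obtain b :: "'a set \<Rightarrow> 'f" where b: "clique_chain G X (Suc (Suc (Suc m))) b"
      and db: "\<And>\<sigma>. \<sigma> \<subseteq> X \<Longrightarrow> card \<sigma> = Suc (Suc m) \<Longrightarrow> c \<sigma> = boundary X b \<sigma>"
      unfolding is_clique_boundary_def by auto
    have "is_chain ?K (Suc (Suc (Suc m))) b" using b by (simp add: is_chain_clique_complex_iff)
    moreover have "\<forall>\<tau>\<in>simplices ?K (Suc (Suc m)). c \<tau> = bdry ?K (Suc (Suc (Suc m))) b \<tau>"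
      using db bdry[OF \<open>is_chain ?K _ b\<close>] by (auto simp: simplices_clique_complex clique_def)
    ultimately show False using not_bdry by blast
  qed
  ultimately show ?thesis using that by blast
qed

lemma homology_nonzero_clique_complex_two_points:
  fixes X :: "'a::linorder set"
  assumes "card X = 2"
  shows "homology_nonzero TYPE('f::field) (clique_complex G X) 0"
proof -
  obtain u v where X: "X = {u, v}" "u < v"
    using assms by (metis card_2_iff insert_commute linorder_neqE)
  let ?K = "clique_complex G X"
  define c :: "'a set \<Rightarrow> 'f" where "c \<sigma> = (if \<sigma> = {u} then 1 else 0)" for \<sigma>
  have vertices: "{u} \<in> simplices ?K 1" "{v} \<in> simplices ?K 1"
    using X by (auto simp: simplices_clique_complex clique_def)
  have "simplices ?K 0 = {}"
    using X by (auto simp: simplices_def clique_complex_def clique_def finite_subset)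
  moreover have "is_chain ?K 1 c" using vertices by (auto simp: is_chain_def c_def)
  moreover have "\<exists>\<tau>\<in>simplices ?K 1. c \<tau> \<noteq> bdry ?K 2 b \<tau>" if b: "is_chain ?K 2 b" for b :: "'a set \<Rightarrow> 'f"
  proof -
    have "{y \<in> {u}. y < v} = {u}" "{y \<in> {v}. y < u} = {}" using X by auto
    then have "insert_sign v {u} = (-1 :: 'f)" "insert_sign u {v} = (1 :: 'f)"
      unfolding insert_sign_def by (simp_all only:) simp_all
    moreover have "X - {u} = {v}" "X - {v} = {u}" using X by auto
    ultimately have "boundary X b {u} = - b {u, v}" "boundary X b {v} = b {u, v}"
      by (simp_all add: boundary_def insert_commute)
    then have bd: "bdry ?K 2 b {u} = - b {u, v}" "bdry ?K 2 b {v} = b {u, v}"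
      using X bdry_eq_boundary[OF _ clique_complex_subset_Pow b] by auto
    show ?thesis
    proof (cases "b {u, v} = 0")
      case True
      then show ?thesis using vertices(1) bd(1) by (force simp: c_def)
    next
      case False
      then show ?thesis using vertices(2) bd(2) X(2) by (force simp: c_def)
    qed
  qed
  ultimately show ?thesis unfolding homology_nonzero_def by (auto simp: numeral_2_eq_2)
qed

lemma neighbours_eq_if_squeezed:
  fixes z1 z3 :: "'a::linorder set \<Rightarrow> 'f::field"
  assumes X: "finite X" "card X = 2 * Suc m + 2" "x \<in> X"
    and N12: "neighbours G1 X x \<subseteq> neighbours G2 X x"
    and N23: "neighbours G2 X x \<subseteq> neighbours G3 X x"
    and z1: "clique_chain G1 X (Suc (Suc m)) z1" "is_cycle X (Suc m) z1"
      "\<not> is_clique_boundary G1 X X (Suc (Suc m)) z1"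
    and z3: "clique_chain G3 X (Suc (Suc m)) z3" "is_cycle X (Suc m) z3"
      "\<not> is_clique_boundary G3 X X (Suc (Suc m)) z3"
  shows "neighbours G2 X x = neighbours G1 X x"
proof
  show "neighbours G2 X x \<subseteq> neighbours G1 X x"
  proof
    fix y assume y2: "y \<in> neighbours G2 X x"
    obtain u where u: "u \<in> X - insert x (neighbours G3 X x)"
      using non_neighbour_exists[OF X(1,3) z3] by blast
    show "y \<in> neighbours G1 X x"
    proof (rule ccontr)
      assume "y \<notin> neighbours G1 X x"
      then have "y \<in> X - insert x (neighbours G1 X x)" using y2 by (auto simp: neighbours_def)
      moreover have "u \<in> X - insert x (neighbours G1 X x)" using u N12 N23 by blast
      ultimately have "y = u" by (rule non_neighbour_unique[OF X z1])
      then show False using u y2 N23 by blast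
    qed
  qed
qed (fact N12)

lemma clique_complex_homology_convex:
  fixes X :: "'a::linorder set"
  assumes X: "finite X" "card X = 2 * k + 2"
    and G12: "\<And>x y. x \<in> X \<Longrightarrow> y \<in> X \<Longrightarrow> G1 x y \<Longrightarrow> G2 x y"
    and G23: "\<And>x y. x \<in> X \<Longrightarrow> y \<in> X \<Longrightarrow> G2 x y \<Longrightarrow> G3 x y"
    and H1: "homology_nonzero TYPE('f::field) (clique_complex G1 X) k"
    and H3: "homology_nonzero TYPE('f) (clique_complex G3 X) k"
  shows "homology_nonzero TYPE('f) (clique_complex G2 X) k"
proof (cases k)
  case 0
  then have "card X = 2" using X(2) by simp
  then show ?thesis unfolding \<open>k = 0\<close> by (rule homology_nonzero_clique_complex_two_points)
next
  case (Suc m)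
  have "homology_nonzero TYPE('f) (clique_complex G1 X) (Suc m)" using H1 Suc by simp
  then obtain z1 :: "'a set \<Rightarrow> 'f" where z1: "clique_chain G1 X (Suc (Suc m)) z1"
      "is_cycle X (Suc m) z1" "\<not> is_clique_boundary G1 X X (Suc (Suc m)) z1"
    by (rule homology_nonzero_clique_complexE[OF X(1)])
  have "homology_nonzero TYPE('f) (clique_complex G3 X) (Suc m)" using H3 Suc by simp
  then obtain z3 :: "'a set \<Rightarrow> 'f" where z3: "clique_chain G3 X (Suc (Suc m)) z3"
      "is_cycle X (Suc m) z3" "\<not> is_clique_boundary G3 X X (Suc (Suc m)) z3"
    by (rule homology_nonzero_clique_complexE[OF X(1)])
  have "neighbours G2 X x = neighbours G1 X x" if x: "x \<in> X" for x
    using neighbours_eq_if_squeezed[OF X(1) _ x neighbours_mono[OF x G12] neighbours_mono[OF x G23] z1 z3]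
      X(2) Suc by simp
  then show ?thesis using H1 clique_complex_cong[of X G2 G1] by simp
qed

section \<open>Rips complexes as clique complexes\<close>

definition rips_graph :: "(real \<Rightarrow> 'a \<Rightarrow> 'a \<Rightarrow> real) \<Rightarrow> (real \<times> real) \<times> real \<Rightarrow> 'a \<Rightarrow> 'a \<Rightarrow> bool" where
  "rips_graph dX p x y \<longleftrightarrow> (case p of ((a, b), \<delta>) \<Rightarrow> dI dX a b x y \<le> \<delta>)"

lemma dI_self:
  assumes "DMS X dX" "x \<in> X" "a \<le> b"
  shows "dI dX a b x x = 0"
proof -
  have "dX t x x = 0" for t using assms(1,2) unfolding DMS_def pseudometric_on_def by auto
  then show ?thesis unfolding dI_def using assms(3) by simp
qed

lemma dI_antimono:
  assumes "DMS X dX" "x \<in> X" "y \<in> X" "a \<le> b" "{a..b} \<subseteq> {a'..b'}"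
  shows "dI dX a' b' x y \<le> dI dX a b x y"
  unfolding dI_def
proof (rule cINF_superset_mono)
  have "dX t x y \<ge> 0" for t using assms(1-3) unfolding DMS_def pseudometric_on_def by auto
  then show "bdd_below ((\<lambda>t. dX t x y) ` {a'..b'})" by (intro bdd_belowI[of _ 0]) auto
qed (use assms(4,5) in auto)

lemma rips_lev_eq_clique_complex:
  assumes "DMS X dX" "p \<in> Dyn"
  shows "rips_lev X dX p = clique_complex (rips_graph dX p) X"
proof -
  obtain a b \<delta> where p: "p = ((a, b), \<delta>)" "a \<le> b" "0 \<le> \<delta>"
    using assms(2) unfolding Dyn_def by auto
  have fin: "finite X" using assms(1) by (simp add: DMS_def)
  have "(\<forall>x\<in>\<sigma>. \<forall>y\<in>\<sigma>. dI dX a b x y \<le> \<delta>) \<longleftrightarrow> (\<forall>x\<in>\<sigma>. \<forall>y\<in>\<sigma>. x \<noteq> y \<longrightarrow> dI dX a b x y \<le> \<delta>)"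
    if "\<sigma> \<subseteq> X" for \<sigma>
    using that dI_self[OF assms(1) _ p(2)] p(3) by (metis subsetD)
  then show ?thesis
    using finite_subset[OF _ fin]
    by (auto simp: p(1) rips_lev_def rips_def clique_complex_def clique_def rips_graph_def)
qed

lemma rips_graph_mono:
  assumes "DMS X dX" "p \<in> Dyn" "dyn_le p q" "x \<in> X" "y \<in> X" "rips_graph dX p x y"
  shows "rips_graph dX q x y"
proof -
  obtain a b \<delta> a' b' \<delta>' where pq: "p = ((a, b), \<delta>)" "q = ((a', b'), \<delta>')" by (metis prod.collapse)
  with assms(2,3) have "a \<le> b" "{a..b} \<subseteq> {a'..b'}" "\<delta> \<le> \<delta>'" by (auto simp: Dyn_def dyn_le_def)
  moreover have "dI dX a b x y \<le> \<delta>" using assms(6) pq(1) by (simp add: rips_graph_def)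
  ultimately have "dI dX a' b' x y \<le> \<delta>'" using dI_antimono[OF assms(1,4,5)] by fastforce
  then show ?thesis using pq(2) by (simp add: rips_graph_def)
qed

theorem mainTheorem2:
  fixes X :: "'a::linorder set" and dX :: "real \<Rightarrow> 'a \<Rightarrow> 'a \<Rightarrow> real" and k :: nat
  assumes "DMS X dX" and "card X = 2*k+2"
    and "p \<in> Dyn" and "q \<in> Dyn" and "r \<in> Dyn"
    and "dyn_le p q" and "dyn_le q r"
    and "p \<in> supp_Hk_lev TYPE('f::field) X dX k"
    and "r \<in> supp_Hk_lev TYPE('f::field) X dX k"
  shows "q \<in> supp_Hk_lev TYPE('f::field) X dX k"
proof -
  have fin: "finite X" using assms(1) by (simp add: DMS_def)
  have Hp: "homology_nonzero TYPE('f) (clique_complex (rips_graph dX p) X) k"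
    using assms(8) rips_lev_eq_clique_complex[OF assms(1,3)] by (simp add: supp_Hk_lev_def)
  have Hr: "homology_nonzero TYPE('f) (clique_complex (rips_graph dX r) X) k"
    using assms(9) rips_lev_eq_clique_complex[OF assms(1,5)] by (simp add: supp_Hk_lev_def)
  have "homology_nonzero TYPE('f) (clique_complex (rips_graph dX q) X) k"
    by (rule clique_complex_homology_convex[OF fin assms(2)
          rips_graph_mono[OF assms(1,3,6)] rips_graph_mono[OF assms(1,4,7)] Hp Hr])
  then show ?thesis
    using assms(4) rips_lev_eq_clique_complex[OF assms(1,4)] by (simp add: supp_Hk_lev_def)
qed

end
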